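(* Let $P(z)=a_0z^n+a_1z^{n-1}+\dots+a_n$ with $a_j\in\mathbb{C}$, $a_0\neq 0$, $n\ge 1$, and define $f(r,\theta)=\frac{P'(re^{i\theta})}{P(re^{i\theta})}$ for $r\ge 0$, $\theta\in\mathbb{R}$ with $P(re^{i\theta})\neq 0$. Let $0<a<b$ and suppose the closed annulus $K(a,b)=\{z\in\mathbb{C}: a\le|z|\le b\}$ contains no root of $P$. Then $$\left|\frac{\partial}{\partial\theta}f(r,\theta)\right|\le \frac{9nb}{(b-a)^2}\qquad\text{for } r=a+k\tfrac{b-a}{3},\ k=1,2,\ \theta\in\mathbb{R}.$$
   Context: $P'$ denotes the derivative of $P$. *)

theory Defs
  imports "HOL-Analysis.Analysis" "HOL-Computational_Algebra.Polynomial"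
begin

definition logderiv_polar :: "complex poly \<Rightarrow> real \<Rightarrow> real \<Rightarrow> complex" where
  "logderiv_polar P r \<theta> =
     poly (pderiv P) (complex_of_real r * cis \<theta>) / poly P (complex_of_real r * cis \<theta>)"

end

theory Submission
  imports Defs "HOL-Computational_Algebra.Fundamental_Theorem_Algebra"
begin

text \<open>Factoring \<open>P\<close> over its roots \<open>\<rho>\<^sub>j\<close> gives \<open>P'/P = \<Sum>\<^sub>j 1/(z - \<rho>\<^sub>j)\<close>, so with
  \<open>z = r e\<^sup>i\<^sup>\<theta>\<close> the chain rule yields \<open>\<partial>f/\<partial>\<theta> = -i z \<Sum>\<^sub>j 1/(z - \<rho>\<^sub>j)\<^sup>2\<close> and hence
  \<open>|\<partial>f/\<partial>\<theta>| \<le> n r / d\<^sup>2\<close> whenever every root is at distance at least \<open>d\<close> from the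
  circle \<open>|z| = r\<close>. For \<open>r = a + k(b - a)/3\<close> with \<open>k \<in> {1, 2}\<close> the circle lies at distance
  at least \<open>(b - a)/3\<close> from both boundary circles of the root-free annulus, so \<open>d = (b - a)/3\<close>
  works and \<open>r \<le> b\<close>.\<close>

lemma poly_pderiv_prod_linear_factors:
  fixes \<rho> :: "nat \<Rightarrow> 'a::field"
  assumes "\<forall>i<m. z \<noteq> \<rho> i"
  shows "poly (pderiv (\<Prod>i<m. [:-\<rho> i, 1:])) z
           = poly (\<Prod>i<m. [:-\<rho> i, 1:]) z * (\<Sum>i<m. 1 / (z - \<rho> i))"
  using assms
proof (induction m)
  case 0
  then show ?case by simp
next
  case (Suc m)
  let ?Q = "\<Prod>i<m. [:-\<rho> i, 1:]"
  have "pderiv [:-\<rho> m, 1:] = 1"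
    by (simp add: pderiv_pCons)
  then have step: "poly (pderiv (?Q * [:-\<rho> m, 1:])) z = poly (pderiv ?Q) z * (z - \<rho> m) + poly ?Q z"
    unfolding pderiv_mult by (simp add: algebra_simps)
  have IH: "poly (pderiv ?Q) z = poly ?Q z * (\<Sum>i<m. 1 / (z - \<rho> i))"
    using Suc by simp
  show ?case
    using Suc.prems unfolding prod.lessThan_Suc sum.lessThan_Suc step IH poly_mult
    by (simp add: field_simps)
qed

lemma poly_linear_factors_root:
  fixes \<rho> :: "nat \<Rightarrow> 'a::idom"
  assumes "P = smult c (\<Prod>i<m. [:-\<rho> i, 1:])" and "j < m"
  shows "poly P (\<rho> j) = 0"
  using assms by (auto simp: poly_prod)

lemma logderiv_eq_sum_roots:
  fixes P :: "complex poly"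
  assumes roots: "P = smult (lead_coeff P) (\<Prod>i<degree P. [:-\<rho> i, 1:])"
    and "poly P z \<noteq> 0"
  shows "poly (pderiv P) z / poly P z = (\<Sum>i<degree P. 1 / (z - \<rho> i))"
proof -
  let ?Q = "\<Prod>i<degree P. [:-\<rho> i, 1:]"
  have "poly ?Q z \<noteq> 0" "lead_coeff P \<noteq> 0"
    using assms by (metis mult_zero_right poly_smult, metis leading_coeff_0_iff poly_0)
  moreover have "\<forall>i<degree P. z \<noteq> \<rho> i"
    using \<open>poly ?Q z \<noteq> 0\<close> by (auto simp: poly_prod)
  ultimately show ?thesis
    by (subst (1 2) roots) (simp add: pderiv_smult poly_pderiv_prod_linear_factors)
qed

lemma logderiv_polar_has_vector_derivative:
  fixes P :: "complex poly" and r \<theta> :: real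
  defines "w \<equiv> complex_of_real r * cis \<theta>"
  assumes roots: "P = smult (lead_coeff P) (\<Prod>i<degree P. [:-\<rho> i, 1:])"
    and circle_root_free: "\<forall>t. poly P (complex_of_real r * cis t) \<noteq> 0"
  shows "((\<lambda>t. logderiv_polar P r t) has_vector_derivative
           - \<i> * w * (\<Sum>i<degree P. 1 / (w - \<rho> i)^2)) (at \<theta>)"
proof -
  define g where "g z = (\<Sum>i<degree P. 1 / (z - \<rho> i))" for z
  have w_not_root: "w \<noteq> \<rho> i" if "i < degree P" for i
    using poly_linear_factors_root[OF roots that] circle_root_free w_def by metis
  have circle: "((\<lambda>t. complex_of_real r * cis t) has_vector_derivative \<i> * w) (at \<theta>)"
    unfolding has_vector_derivative_def w_def
    by (auto intro!: derivative_eq_intros simp: algebra_simps)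
  have g: "(g has_field_derivative - (\<Sum>i<degree P. 1 / (w - \<rho> i)^2)) (at w)"
    unfolding g_def
    by (auto intro!: derivative_eq_intros sum.cong simp: w_not_root power2_eq_square simp flip: sum_negf)
  have "logderiv_polar P r t = g (complex_of_real r * cis t)" for t
    unfolding logderiv_polar_def g_def
    using logderiv_eq_sum_roots[OF roots] circle_root_free by blast
  with field_vector_diff_chain_at[OF circle g[unfolded w_def]] show ?thesis
    by (simp add: o_def w_def)
qed

lemma norm_sum_inverse_square_le:
  fixes w :: "'a::real_normed_field"
  assumes "0 < d" and "\<forall>i\<in>I. d \<le> norm (w - \<rho> i)"
  shows "norm (\<Sum>i\<in>I. 1 / (w - \<rho> i)^2) \<le> card I / d^2"
proof -
  have bound: "norm (1 / (w - \<rho> i)^2) \<le> 1 / d^2" if "i \<in> I" for i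
  proof -
    have "d^2 \<le> norm (w - \<rho> i)^2"
      using assms that by (intro power_mono) auto
    then have "1 / norm (w - \<rho> i)^2 \<le> 1 / d^2"
      using \<open>0 < d\<close> by (intro divide_left_mono mult_pos_pos) auto
    then show ?thesis
      by (simp add: norm_divide norm_power)
  qed
  have "norm (\<Sum>i\<in>I. 1 / (w - \<rho> i)^2) \<le> (\<Sum>i\<in>I. norm (1 / (w - \<rho> i)^2))"
    by (rule norm_sum)
  also have "\<dots> \<le> (\<Sum>i\<in>I. 1 / d^2)"
    using bound by (rule sum_mono)
  finally show ?thesis
    by simp
qed

lemma norm_vector_derivative_logderiv_polar_le:
  fixes P :: "complex poly" and r d \<theta> :: real
  assumes "P \<noteq> 0" and "0 \<le> r" and "0 < d"
    and roots_far: "\<forall>z w. poly P z = 0 \<longrightarrow> cmod w = r \<longrightarrow> d \<le> cmod (w - z)"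
  shows "cmod (vector_derivative (\<lambda>t. logderiv_polar P r t) (at \<theta>)) \<le> degree P * r / d^2"
proof -
  obtain \<rho> where roots: "P = smult (lead_coeff P) (\<Prod>i<degree P. [:-\<rho> i, 1:])"
    by (metis complex_poly_decompose')
  have on_circle: "cmod (complex_of_real r * cis t) = r" for t
    using \<open>0 \<le> r\<close> by (simp add: norm_mult)
  have "poly P (complex_of_real r * cis t) \<noteq> 0" for t
  proof
    assume "poly P (complex_of_real r * cis t) = 0"
    then have "d \<le> cmod (complex_of_real r * cis t - complex_of_real r * cis t)"
      using roots_far on_circle by blast
    with \<open>0 < d\<close> show False
      by simp
  qed
  note derivative = logderiv_polar_has_vector_derivative[OF roots allI[OF this], of \<theta>]
  let ?w = "complex_of_real r * cis \<theta>"
  have "\<forall>i\<in>{..<degree P}. d \<le> cmod (?w - \<rho> i)"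
    using roots_far on_circle poly_linear_factors_root[OF roots] by blast
  then have "cmod (\<Sum>i<degree P. 1 / (?w - \<rho> i)^2) \<le> degree P / d^2"
    using norm_sum_inverse_square_le \<open>0 < d\<close> by fastforce
  then have "r * cmod (\<Sum>i<degree P. 1 / (?w - \<rho> i)^2) \<le> r * (degree P / d^2)"
    using \<open>0 \<le> r\<close> by (rule mult_left_mono)
  then show ?thesis
    using vector_derivative_at[OF derivative] on_circle by (simp add: norm_mult ac_simps)
qed

lemma norm_diff_ge_outside_annulus:
  fixes z w :: "'a::real_normed_vector"
  assumes "norm z < a \<or> b < norm z" and "a + d \<le> norm w" and "norm w + d \<le> b"
  shows "d \<le> norm (w - z)"
  using assms norm_triangle_ineq2[of w z] norm_triangle_ineq2[of z w] norm_minus_commute[of w z]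
  by linarith

theorem lemma2p2:
  fixes P :: "complex poly" and n :: nat and a b r \<theta> :: real and k :: nat
  assumes "degree P = n" and "n \<ge> 1"
    and "0 < a" and "a < b"
    and "\<forall>z. a \<le> cmod z \<and> cmod z \<le> b \<longrightarrow> poly P z \<noteq> 0"
    and "k \<in> {1, 2}"
    and "r = a + real k * (b - a) / 3"
  shows "cmod (vector_derivative (\<lambda>t. logderiv_polar P r t) (at \<theta>))
           \<le> 9 * real n * b / (b - a)^2"
proof -
  define d where "d = (b - a) / 3"
  have "0 < d" "a + d \<le> r" "r + d \<le> b"
    using assms(4,6,7) by (auto simp: d_def field_simps)
  moreover have "\<forall>z w. poly P z = 0 \<longrightarrow> cmod w = r \<longrightarrow> d \<le> cmod (w - z)"
    using assms(5) \<open>a + d \<le> r\<close> \<open>r + d \<le> b\<close>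
    by (metis norm_diff_ge_outside_annulus not_less)
  moreover have "P \<noteq> 0"
    using assms(1,2) by auto
  ultimately have "cmod (vector_derivative (\<lambda>t. logderiv_polar P r t) (at \<theta>)) \<le> n * r / d^2"
    using norm_vector_derivative_logderiv_polar_le assms(1,3) by fastforce
  also have "\<dots> \<le> n * b / d^2"
    using \<open>r + d \<le> b\<close> \<open>0 < d\<close> by (intro divide_right_mono mult_left_mono) auto
  also have "\<dots> = 9 * real n * b / (b - a)^2"
    by (simp add: d_def power_divide)
  finally show ?thesis .
qed

end
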